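(* Let $\kappa$ be an uncountable regular cardinal and let $\mathcal{I}$ be a $\kappa$-complete proper ideal on $\kappa$ containing every bounded subset of $\kappa$, and suppose $\mathcal{I}$ contains an unbounded subset of $\kappa$. Let $\nu\in\{2,\kappa\}$. Then: (1) every nonempty $A\subseteq{}^{\kappa}\nu$ is an $\mathcal{I}$-continuous image of ${}^{\kappa}\kappa$; (2) every $A\subseteq{}^{\kappa}\nu$ is an injective $\mathcal{I}$-continuous image of some $\mathcal{I}$-closed set $C\subseteq{}^{\kappa}\kappa$, i.e. there is an $\mathcal{I}$-continuous function $\Phi$ defined on $C$ (with the subspace topology) that is injective and satisfies $\Phi(C)=A$.
   Context: For $\mu\in\{2,\kappa\}$, ${}^{\kappa}\mu$ is the set of functions $\kappa\to\mu$ with the topology $\tau_{\mathcal{I}}$ generated by the sets $\mathbf{N}_f=\{x:f\subseteq x\}$ for $f\colon D\to\mu$, $D\in\mathcal{I}$. $\mathcal{I}$-continuous means continuous with respect to these topologies; $\mathcal{I}$-closed means $\tau_{\mathcal{I}}$-closed. In (1), $A$ being an $\mathcal{I}$-continuous image of ${}^{\kappa}\kappa$ means there is an $\mathcal{I}$-continuous surjection ${}^{\kappa}\kappa\to A$. *)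

theory Defs
  imports "HOL-Analysis.Analysis"
begin

text \<open>The cardinal kappa is represented by a type 'k carrying a cardinal order r
  (a well-order on UNIV which is minimal among well-orders of the same size).
  Ordinals below kappa are the elements of 'k, ordered by r.\<close>

definition bounded_in :: "'k rel \<Rightarrow> 'k set \<Rightarrow> bool" where
  "bounded_in r X \<longleftrightarrow> (\<exists>b. \<forall>a\<in>X. (a, b) \<in> r)"

definition is_ideal :: "'k set set \<Rightarrow> bool" where
  "is_ideal I \<longleftrightarrow> {} \<in> I \<and> (\<forall>X\<in>I. \<forall>Y. Y \<subseteq> X \<longrightarrow> Y \<in> I)
     \<and> (\<forall>X\<in>I. \<forall>Y\<in>I. X \<union> Y \<in> I)"

definition kappa_complete :: "'k rel \<Rightarrow> 'k set set \<Rightarrow> bool" where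
  "kappa_complete r I \<longleftrightarrow> (\<forall>F. F \<subseteq> I \<and> (card_of F, r) \<in> ordLess \<longrightarrow> \<Union>F \<in> I)"

text \<open>A function f : D -> mu is
  represented by (D, g) with g a total function, only g restricted to D matters.\<close>
definition ideal_top :: "'k set set \<Rightarrow> ('k \<Rightarrow> 'v) topology" where
  "ideal_top I = topology_generated_by {{x. \<forall>i\<in>D. x i = g i} | D g. D \<in> I}"

end

theory Submission
  imports Defs
begin

text \<open>Since \<open>\<kappa>\<close> is regular, the unbounded set \<open>X \<in> \<I>\<close> has size \<open>\<kappa>\<close>; fix a bijection
  \<open>h : \<kappa> \<rightarrow> X\<close>. The reindexing \<open>x \<mapsto> x \<circ> h\<close> is a surjection of \<open>\<^sup>\<kappa>\<kappa>\<close> onto itself that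
  only reads the coordinates in \<open>X\<close>, so anything computed from \<open>x \<circ> h\<close> is constant on the
  open neighbourhood \<open>N\<^bsub>x|X\<^esub>\<close> of \<open>x\<close> and hence \<open>\<I>\<close>-continuous. Composing it with a
  surjection of \<open>\<^sup>\<kappa>\<kappa>\<close> onto \<open>A\<close> gives (1). For (2), restrict to the points that
  are fixed outside \<open>X\<close> and whose reindexing codes an element of \<open>A\<close>: this set is
  \<open>\<I>\<close>-closed because singletons lie in \<open>\<I>\<close>, and the decoding map is injective on it.\<close>

lemma topspace_ideal_top:
  assumes "I \<noteq> {}"
  shows "topspace (ideal_top I) = UNIV"
  unfolding ideal_top_def topology_generated_by_topspace using assms by blast

lemma openin_ideal_top_saturated:
  assumes X: "X \<in> I"
    and saturated: "\<And>y z. y \<in> V \<Longrightarrow> \<forall>i\<in>X. z i = y i \<Longrightarrow> z \<in> V"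
  shows "openin (ideal_top I) V"
proof -
  have cylinder_open: "openin (ideal_top I) {z. \<forall>i\<in>X. z i = y i}" for y
    unfolding ideal_top_def by (rule topology_generated_by_Basis) (use X in blast)
  have "V = (\<Union>y\<in>V. {z. \<forall>i\<in>X. z i = y i})"
    using saturated by auto
  also have "openin (ideal_top I) \<dots>"
    using cylinder_open by blast
  finally show ?thesis .
qed

lemma continuous_map_ideal_top_comp_reindex:
  assumes "range h \<in> I" and "J \<noteq> {}"
  shows "continuous_map (ideal_top I) (ideal_top J) (\<lambda>x. \<Psi> (x \<circ> h))"
proof -
  have "I \<noteq> {}"
    using assms(1) by blast
  have "openin (ideal_top I) {x \<in> topspace (ideal_top I). \<Psi> (x \<circ> h) \<in> U}" for U
  proof (rule openin_ideal_top_saturated[OF assms(1)])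
    fix y z assume "y \<in> {x \<in> topspace (ideal_top I). \<Psi> (x \<circ> h) \<in> U}"
      and "\<forall>i\<in>range h. z i = y i"
    then show "z \<in> {x \<in> topspace (ideal_top I). \<Psi> (x \<circ> h) \<in> U}"
      using \<open>I \<noteq> {}\<close> by (auto simp: topspace_ideal_top comp_def)
  qed
  then show ?thesis
    unfolding continuous_map_def using topspace_ideal_top[OF assms(2)] by blast
qed

lemma closedin_ideal_top_reindex_preimage:
  assumes "range h \<in> I"
  shows "closedin (ideal_top I) {x. x \<circ> h \<in> B}"
proof -
  have "I \<noteq> {}"
    using assms by blast
  have "openin (ideal_top I) {x. x \<circ> h \<notin> B}"
    by (rule openin_ideal_top_saturated[OF assms]) (auto simp: comp_def)
  then show ?thesis
    using \<open>I \<noteq> {}\<close> by (simp add: closedin_def topspace_ideal_top Collect_neg_eq Compl_eq_Diff_UNIV)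
qed

lemma closedin_ideal_top_fixed_coordinates:
  assumes "I \<noteq> {}" and "\<forall>j\<in>Y. {j} \<in> I"
  shows "closedin (ideal_top I) {x. \<forall>j\<in>Y. x j = c j}"
proof -
  have "openin (ideal_top I) {x. x j \<noteq> c j}" if "j \<in> Y" for j
    by (rule openin_ideal_top_saturated[of "{j}"]) (use assms(2) that in auto)
  then have "openin (ideal_top I) (\<Union>j\<in>Y. {x. x j \<noteq> c j})"
    by blast
  moreover have "UNIV - {x. \<forall>j\<in>Y. x j = c j} = (\<Union>j\<in>Y. {x. x j \<noteq> c j})"
    by blast
  ultimately show ?thesis
    using assms(1) by (simp add: closedin_def topspace_ideal_top)
qed

lemma ex_continuous_map_ideal_top_onto:
  fixes A :: "('j \<Rightarrow> 'v) set" and emb :: "('j \<Rightarrow> 'v) \<Rightarrow> 'i \<Rightarrow> 'w"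
    and h :: "'i \<Rightarrow> 'k"
  assumes h: "inj h" "range h \<in> I" and emb: "inj_on emb A"
    and "A \<noteq> {}" and "J \<noteq> {}"
  shows "\<exists>\<Phi> :: ('k \<Rightarrow> 'w) \<Rightarrow> 'j \<Rightarrow> 'v.
           continuous_map (ideal_top I) (ideal_top J) \<Phi> \<and> range \<Phi> = A"
proof -
  define decode where "decode g = (if g \<in> emb ` A then inv_into A emb g else (SOME a. a \<in> A))"
    for g
  define \<Phi> where "\<Phi> x = decode (x \<circ> h)" for x
  have "continuous_map (ideal_top I) (ideal_top J) \<Phi>"
    unfolding \<Phi>_def using continuous_map_ideal_top_comp_reindex h(2) \<open>J \<noteq> {}\<close> .
  moreover have "range \<Phi> \<subseteq> A"
    unfolding \<Phi>_def decode_def using \<open>A \<noteq> {}\<close> by (auto simp: inv_into_into some_in_eq)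
  moreover have "a \<in> range \<Phi>" if "a \<in> A" for a
  proof -
    have "(emb a \<circ> inv h) \<circ> h = emb a"
      using h(1) by (auto simp: fun_eq_iff)
    then have "\<Phi> (emb a \<circ> inv h) = a"
      unfolding \<Phi>_def decode_def using that emb by simp
    then show ?thesis by (metis rangeI)
  qed
  ultimately show ?thesis by blast
qed

lemma ex_injective_continuous_map_ideal_top_closed_onto:
  fixes A :: "('j \<Rightarrow> 'v) set" and emb :: "('j \<Rightarrow> 'v) \<Rightarrow> 'i \<Rightarrow> 'w"
    and h :: "'i \<Rightarrow> 'k"
  assumes h: "inj h" "range h \<in> I" and singletons: "\<forall>j. {j} \<in> I" and emb: "inj_on emb A"
    and "J \<noteq> {}"
  shows "\<exists>(C :: ('k \<Rightarrow> 'w) set) \<Phi>. closedin (ideal_top I) C \<and>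
           continuous_map (subtopology (ideal_top I) C) (ideal_top J) \<Phi> \<and>
           inj_on \<Phi> C \<and> \<Phi> ` C = A"
proof -
  define C where
    "C = {x. x \<circ> h \<in> emb ` A} \<inter> {x. \<forall>j\<in>- range h. x j = undefined}"
  define \<Phi> where "\<Phi> x = inv_into A emb (x \<circ> h)" for x
  have "closedin (ideal_top I) C"
    unfolding C_def using h(2) singletons
    by (intro closedin_Int closedin_ideal_top_reindex_preimage closedin_ideal_top_fixed_coordinates)
      auto
  moreover have "continuous_map (subtopology (ideal_top I) C) (ideal_top J) \<Phi>"
    unfolding \<Phi>_def
    by (rule continuous_map_from_subtopology[OF continuous_map_ideal_top_comp_reindex])
      (use h(2) \<open>J \<noteq> {}\<close> in auto)
  moreover have "inj_on \<Phi> C"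
  proof (rule inj_onI)
    fix x y assume x: "x \<in> C" and y: "y \<in> C" and "\<Phi> x = \<Phi> y"
    then have "x \<circ> h = y \<circ> h"
      unfolding C_def \<Phi>_def using emb by (auto simp: inv_into_f_f)
    then have "x i = y i" if "i \<in> range h" for i
      using that by (auto simp: fun_eq_iff)
    moreover have "x i = y i" if "i \<notin> range h" for i
      using that x y unfolding C_def by auto
    ultimately show "x = y"
      by (meson ext)
  qed
  moreover have "\<Phi> ` C = A"
  proof
    show "\<Phi> ` C \<subseteq> A"
      unfolding \<Phi>_def C_def using emb by (auto simp: inv_into_f_f)
  next
    show "A \<subseteq> \<Phi> ` C"
    proof
      fix a assume a: "a \<in> A"
      define x where "x i = (if i \<in> range h then emb a (inv h i) else undefined)" for i
      have "x \<circ> h = emb a"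
        using h(1) unfolding x_def by auto
      moreover have "\<forall>j\<in>- range h. x j = undefined"
        unfolding x_def by simp
      ultimately have "x \<in> C" and "\<Phi> x = a"
        unfolding C_def \<Phi>_def using a emb by auto
      then show "a \<in> \<Phi> ` C" by blast
    qed
  qed
  ultimately show ?thesis by blast
qed

lemma card_order_refl: "card_order r \<Longrightarrow> (a, a) \<in> r"
  using card_order_on_well_order_on wo_rel.REFL[unfolded wo_rel_def]
  by (metis UNIV_I refl_onD card_order_on_Card_order)

lemma card_order_total: "card_order r \<Longrightarrow> (a, b) \<in> r \<or> (b, a) \<in> r"
  using card_order_on_well_order_on wo_rel.TOTALS[unfolded wo_rel_def]
  by (metis UNIV_I card_order_on_Card_order)

lemma bij_betw_UNIV_unbounded:
  fixes r :: "'k rel"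
  assumes card: "card_order r" and regular: "regularCard r" and "\<not> bounded_in r X"
  shows "\<exists>h. bij_betw h (UNIV :: 'k set) X"
proof -
  have "cofinal X r"
    unfolding cofinal_def
  proof
    fix a
    from \<open>\<not> bounded_in r X\<close> obtain b where "b \<in> X" "(b, a) \<notin> r"
      unfolding bounded_in_def by blast
    then show "\<exists>b\<in>X. a \<noteq> b \<and> (a, b) \<in> r"
      using card_order_refl[OF card] card_order_total[OF card] by metis
  qed
  then have "(card_of X, r) \<in> ordIso"
    using regular card_order_on_Card_order[OF card] unfolding regularCard_def by blast
  moreover have "(r, card_of (UNIV :: 'k set)) \<in> ordIso"
    using card card_of_unique by blast
  ultimately have "(card_of (UNIV :: 'k set), card_of X) \<in> ordIso"
    using ordIso_transitive ordIso_symmetric by blast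
  then show ?thesis
    using card_of_ordIso by blast
qed

lemma inj_encode_bool_functions:
  assumes "c1 \<noteq> c0"
  shows "inj (\<lambda>f i. if f i then c1 else c0)"
  using assms by (auto intro!: injI simp: fun_eq_iff split: if_splits)

theorem proposition5p5:
  fixes r :: "'k rel" and I :: "'k set set"
  assumes card: "card_order r"
    and uncountable: "(natLeq, r) \<in> ordLess"
    and regular: "regularCard r"
    and ideal: "is_ideal I"
    and complete: "kappa_complete r I"
    and proper: "UNIV \<notin> I"
    and bounded: "\<forall>X. bounded_in r X \<longrightarrow> X \<in> I"
    and unbounded: "\<exists>X\<in>I. \<not> bounded_in r X"
  shows
   "(\<forall>A :: ('k \<Rightarrow> bool) set. A \<noteq> {} \<longrightarrow>
        (\<exists>\<Phi> :: ('k \<Rightarrow> 'k) \<Rightarrow> ('k \<Rightarrow> bool).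
            continuous_map (ideal_top I) (ideal_top I) \<Phi> \<and> \<Phi> ` UNIV = A))
  \<and> (\<forall>A :: ('k \<Rightarrow> 'k) set. A \<noteq> {} \<longrightarrow>
        (\<exists>\<Phi> :: ('k \<Rightarrow> 'k) \<Rightarrow> ('k \<Rightarrow> 'k).
            continuous_map (ideal_top I) (ideal_top I) \<Phi> \<and> \<Phi> ` UNIV = A))
  \<and> (\<forall>A :: ('k \<Rightarrow> bool) set.
        \<exists>(C :: ('k \<Rightarrow> 'k) set) (\<Phi> :: ('k \<Rightarrow> 'k) \<Rightarrow> ('k \<Rightarrow> bool)).
            closedin (ideal_top I) C \<and>
            continuous_map (subtopology (ideal_top I) C) (ideal_top I) \<Phi> \<and>
            inj_on \<Phi> C \<and> \<Phi> ` C = A)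
  \<and> (\<forall>A :: ('k \<Rightarrow> 'k) set.
        \<exists>(C :: ('k \<Rightarrow> 'k) set) (\<Phi> :: ('k \<Rightarrow> 'k) \<Rightarrow> ('k \<Rightarrow> 'k)).
            closedin (ideal_top I) C \<and>
            continuous_map (subtopology (ideal_top I) C) (ideal_top I) \<Phi> \<and>
            inj_on \<Phi> C \<and> \<Phi> ` C = A)"
proof -
  have "I \<noteq> {}"
    using ideal unfolding is_ideal_def by blast
  have singletons: "\<forall>j. {j} \<in> I"
    using bounded card_order_refl[OF card] unfolding bounded_in_def by blast
  obtain X where X: "X \<in> I" "\<not> bounded_in r X"
    using unbounded by blast
  then obtain h :: "'k \<Rightarrow> 'k" where "bij_betw h UNIV X"
    using bij_betw_UNIV_unbounded[OF card regular] by blast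
  then have h: "inj h" "range h \<in> I"
    using X(1) by (auto simp: bij_betw_def)
  obtain c0 c1 :: 'k where "c1 \<noteq> c0"
    using X(2) card_order_refl[OF card] unfolding bounded_in_def by (metis (full_types))
  then have bool_code: "inj (\<lambda>(f :: 'k \<Rightarrow> bool) i. if f i then c1 else c0)"
    by (rule inj_encode_bool_functions)
  show ?thesis
    by (intro conjI allI impI subset_UNIV
        ex_continuous_map_ideal_top_onto[OF h inj_on_subset[OF bool_code] _ \<open>I \<noteq> {}\<close>]
        ex_continuous_map_ideal_top_onto[OF h inj_on_id _ \<open>I \<noteq> {}\<close>]
        ex_injective_continuous_map_ideal_top_closed_onto[OF h singletons
          inj_on_subset[OF bool_code] \<open>I \<noteq> {}\<close>]
        ex_injective_continuous_map_ideal_top_closed_onto[OF h singletons inj_on_id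
          \<open>I \<noteq> {}\<close>])
qed

end
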